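(* For $n\ge 1$ let $a_n$ be the number of words $w=w_1\cdots w_n$ over $\{1,2,3\}$ such that there is no $i$ with $w_{i+1}=w_i+1$ and no $i$ with $w_{i+2}=w_i+2$ (i.e. $w$ simultaneously avoids the place-difference-value patterns $(12,(\mathbb{P},\{1\},\mathbb{P}),\{(1,2,\{1\})\},(\mathbb{P},\mathbb{P}))$ and $(12,(\mathbb{P},\{2\},\mathbb{P}),\{(1,2,\{2\})\},(\mathbb{P},\mathbb{P}))$). Then $a_1=3$, $a_2=7$, $a_n=a_{n-1}+a_{n-2}+n+1$ for $n\ge 3$, and consequently $a_n=F_{n+5}-n-4$ for all $n\ge1$, where $F_1=F_2=1$ and $F_m=F_{m-1}+F_{m-2}$. *)

theory Defs
  imports "HOL-Number_Theory.Fib"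
begin

definition avoids_pdv :: "nat list \<Rightarrow> bool" where
  "avoids_pdv w \<longleftrightarrow>
     (\<nexists>i. i + 1 < length w \<and> w ! (i + 1) = w ! i + 1) \<and>
     (\<nexists>i. i + 2 < length w \<and> w ! (i + 2) = w ! i + 2)"

definition a_seq :: "nat \<Rightarrow> nat" where
  "a_seq n = card {w. length w = n \<and> set w \<subseteq> {1,2,3} \<and> avoids_pdv w}"

end

theory Submission
  imports Defs
begin

text \<open>Classify admissible words by their first two letters: a word a b c ... is
  admissible iff b c ... is and the letters a, b, c pass a local test, so the numbers of
  admissible words with a given two-letter prefix and n further letters satisfy a linear
  recursion in n. Its solutions are explicit: 0, 1, F(n+2), F(n+3) - 1, and F(n+5) - n - 4
  for the prefix 33, which allows every third letter. Summing over the nine prefixes gives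
  a(n) = F(n+5) - n - 4, and the recursion for a(n) follows from that of F.\<close>

lemma ex_nat_iff_zero_or_Suc: "(\<exists>i::nat. P i) \<longleftrightarrow> P 0 \<or> (\<exists>i. P (Suc i))"
  by (metis not0_implies_Suc)

lemma avoids_pdv_Cons:
  "avoids_pdv (x # v) \<longleftrightarrow>
     (v \<noteq> [] \<longrightarrow> v ! 0 \<noteq> x + 1) \<and> (length v \<ge> 2 \<longrightarrow> v ! 1 \<noteq> x + 2) \<and> avoids_pdv v"
  unfolding avoids_pdv_def
  by (subst (1 2) ex_nat_iff_zero_or_Suc) (auto simp: numeral_2_eq_2)

lemma avoids_pdv_singleton: "avoids_pdv [a]"
  by (simp add: avoids_pdv_def)

lemma avoids_pdv_pair: "avoids_pdv [a, b] \<longleftrightarrow> b \<noteq> a + 1"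
  by (simp add: avoids_pdv_Cons avoids_pdv_def)

lemma avoids_pdv_Cons_Cons_Cons:
  "avoids_pdv (a # b # c # w) \<longleftrightarrow> b \<noteq> a + 1 \<and> c \<noteq> a + 2 \<and> avoids_pdv (b # c # w)"
  by (subst avoids_pdv_Cons) auto

lemma card_lists_length_Suc:
  assumes "finite A"
  shows "card {w. length w = Suc n \<and> set w \<subseteq> A \<and> P w} =
         (\<Sum>c\<in>A. card {w. length w = n \<and> set w \<subseteq> A \<and> P (c # w)})"
proof -
  let ?W = "\<lambda>c. {w. length w = n \<and> set w \<subseteq> A \<and> P (c # w)}"
  have split: "{w. length w = Suc n \<and> set w \<subseteq> A \<and> P w} = (\<Union>c\<in>A. Cons c ` ?W c)"
    by (auto simp: length_Suc_conv)
  have "finite (?W c)" for c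
    by (rule finite_subset[OF _ finite_lists_length_eq[OF assms, of n]]) auto
  then have "card (\<Union>c\<in>A. Cons c ` ?W c) = (\<Sum>c\<in>A. card (Cons c ` ?W c))"
    by (intro card_UN_disjoint) (auto simp: assms)
  also have "\<dots> = (\<Sum>c\<in>A. card (?W c))"
    by (intro sum.cong refl card_image) auto
  finally show ?thesis
    unfolding split .
qed

definition completions :: "nat \<Rightarrow> nat \<Rightarrow> nat \<Rightarrow> nat" where
  "completions n a b = card {w. length w = n \<and> set w \<subseteq> {1,2,3} \<and> avoids_pdv (a # b # w)}"

lemma completions_0: "completions 0 a b = (if b = a + 1 then 0 else 1)"
  by (simp add: completions_def avoids_pdv_pair Collect_conv_if)

lemma completions_Suc:
  "completions (Suc n) a b =
     (\<Sum>c\<in>{1,2,3}. if b \<noteq> a + 1 \<and> c \<noteq> a + 2 then completions n b c else 0)"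
  unfolding completions_def
  by (subst card_lists_length_Suc) (auto simp: avoids_pdv_Cons_Cons_Cons intro!: sum.cong)

lemma completions_closed_form:
  "completions n 1 1 = 1 \<and> completions n 1 2 = 0 \<and> completions n 2 3 = 0 \<and>
   completions n 2 1 = fib (n + 2) \<and> completions n 3 1 = fib (n + 2) \<and>
   completions n 1 3 + 1 = fib (n + 3) \<and>
   completions n 2 2 + 1 = fib (n + 3) \<and>
   completions n 3 2 + 1 = fib (n + 3) \<and>
   completions n 3 3 + n + 4 = fib (n + 5)"
proof (induction n)
  case 0
  show ?case by (simp add: completions_0 numeral_eq_Suc)
next
  case (Suc n)
  then show ?case by (simp add: completions_Suc numeral_eq_Suc)
qed

lemma a_seq_1: "a_seq 1 = 3"
  by (simp add: a_seq_def card_lists_length_Suc avoids_pdv_singleton Collect_conv_if)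

lemma a_seq_Suc_Suc: "a_seq (Suc (Suc n)) = (\<Sum>a\<in>{1,2,3}. \<Sum>b\<in>{1,2,3}. completions n a b)"
  unfolding a_seq_def completions_def
  by (simp add: card_lists_length_Suc)

lemma a_seq_closed_form:
  assumes "n \<ge> 1"
  shows "a_seq n + n + 4 = fib (n + 5)"
proof (cases "n = 1")
  case True
  then show ?thesis by (simp add: a_seq_1[unfolded One_nat_def] numeral_eq_Suc)
next
  case False
  with assms obtain m where "n = Suc (Suc m)"
    by (metis One_nat_def Suc_le_D le_SucE not_less_eq_eq)
  then show ?thesis
    using completions_closed_form[of m] by (simp add: a_seq_Suc_Suc numeral_eq_Suc)
qed

theorem mainTheorem10:
  shows "a_seq 1 = 3 \<and> a_seq 2 = 7 \<and>
         (\<forall>n\<ge>3. a_seq n = a_seq (n - 1) + a_seq (n - 2) + n + 1) \<and>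
         (\<forall>n\<ge>1. int (a_seq n) = int (fib (n + 5)) - int n - 4)"
proof -
  have "a_seq 2 = 7"
    using a_seq_closed_form[of 2] by (simp add: numeral_eq_Suc)
  moreover have "a_seq n = a_seq (n - 1) + a_seq (n - 2) + n + 1" if "n \<ge> 3" for n
  proof -
    obtain m where m: "n = m + 3"
      using \<open>n \<ge> 3\<close> by (metis le_add_diff_inverse2)
    have "fib (m + 8) = fib (m + 7) + fib (m + 6)"
      using fib.simps(3)[of "m + 6"] by (simp add: add.commute)
    moreover have "n - 1 = m + 2" "n - 2 = m + 1"
      using m by simp_all
    ultimately show ?thesis
      using a_seq_closed_form[of "m + 3"] a_seq_closed_form[of "m + 2"] a_seq_closed_form[of "m + 1"]
      by (simp add: m algebra_simps)
  qed
  moreover have "int (a_seq n) = int (fib (n + 5)) - int n - 4" if "n \<ge> 1" for n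
    using a_seq_closed_form[OF that] by linarith
  ultimately show ?thesis
    using a_seq_1 by blast
qed

end
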